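(* Let $\mathcal{G}$ be a pdCG and let $\mathcal{A}$ be a set of pdCGs such that (i) the graphs in $\mathcal{A}$ are pairwise $\preceq_{t}$-incomparable and (ii) every $\mathcal{F}\in \mathcal{A}$ is covered by $\mathcal{G}$ in the model inclusion order, so that $\mathcal{P}(\mathcal{F})$ is a neighbouring submodel of $\mathcal{P}(\mathcal{G})$. Then, for every $\mathcal{H}\in\mathcal{A}$ the set $$\mathcal{B}=\{\mathcal{F} \wedge_{s} \mathcal{H} \mid \mathcal{F} \in \mathcal{A} \setminus \{\mathcal{H}\}\}=\{\mathcal{F} \wedge_{t} \mathcal{H} \mid \mathcal{F} \in \mathcal{A} \setminus \{\mathcal{H}\}\}$$ has the same properties as $\mathcal{A}$, that is, (i) the graphs in $\mathcal{B}$ are pairwise $\preceq_{t}$-incomparable and (ii) every $\mathcal{F}\in \mathcal{B}$ is covered by $\mathcal{H}$ in the model inclusion order, so that $\mathcal{P}(\mathcal{F})$ is a neighbouring submodel of $\mathcal{P}(\mathcal{H})$.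
   Context: Let $V=\{1,\dots,p\}$ and let $\tau$ be a twin-pairing function on $V$, i.e. $\tau(i)\in V$ with $\tau(\tau(i))=i$ and $\tau(i)\neq i$; it is extended to edges by $\tau(i,j)=(\tau(i),\tau(j))$ (endpoints reordered so the smaller comes first) and to sets elementwise. Fix a partition $(L,R)$ of $V$ with $\tau(L)=R$, numbered so that $L=\{1,\dots,q\}$, $R=\{q+1,\dots,p\}$. Let $F_V=\{(i,j): i,j\in V, i<j\}$, $F_L=\{(i,j)\in F_V: i<\tau(j)\}$, $F_R=\{(i,j)\in F_V: i>\tau(j)\}$. A coloured graph $\mathcal G=(\mathcal V,\mathcal E)$ consists of a partition $\mathcal V$ of $V$ into vertex colour classes and a partition $\mathcal E$ of an edge set $E\subseteq F_V$ into edge colour classes. It is a coloured graph for paired data (pdCG) if every colour class is either atomic (a single element) or twin-pairing (of the form $\{i,\tau(i)\}$ or $\{(i,j),\tau(i,j)\}$ with $(i,j)\neq\tau(i,j)$). The associated RCON model for paired data $\mathcal{P}(\mathcal G)$ is the family of Gaussian distributions whose concentration matrix has zero entries for missing edges and equal entries for vertices or edges in the same colour class; $\mathcal{P}$ denotes the family of all pdCGs on $V$. Every pdCG is equivalently represented by the quadruplet $(V,E,\mathbb L,\mathbb E)$ where $E$ is the union of the edge colour classes, $E_L=E\cap F_L$, $E_R=E\cap F_R$, $\mathbb L=\{i\in L:\{i\}\in\mathcal V\}$ and $\mathbb E=\{(i,j)\in E_L\cap\tau(E_R): \{(i,j)\}\in\mathcal E\}$. The model inclusion order is $\mathcal H\preceq_s\mathcal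 G$ iff $\mathcal P(\mathcal H)\subseteq\mathcal P(\mathcal G)$ (iff the edge set of $\mathcal H$ is contained in that of $\mathcal G$ and every vertex, resp. edge, colour class of $\mathcal H$ is a union of vertex, resp. edge, colour classes of $\mathcal G$); $\mathcal H$ is covered by $\mathcal G$ in this order if $\mathcal H\prec_s\mathcal G$ and no $\mathcal F\in\mathcal P$ satisfies $\mathcal H\prec_s\mathcal F\prec_s\mathcal G$; $\wedge_s$ denotes the meet in the lattice $\langle\mathcal P,\preceq_s\rangle$. The twin order is $\mathcal H\preceq_t\mathcal G$ iff $E_{\mathcal H}\subseteq E_{\mathcal G}$, $\mathbb L_{\mathcal H}\subseteq\mathbb L_{\mathcal G}$ and $\mathbb E_{\mathcal H}\subseteq\mathbb E_{\mathcal G}$; $\langle\mathcal P,\preceq_t\rangle$ is a lattice whose meet is $\mathcal G\wedge_t\mathcal H=(V,E_{\mathcal G}\cap E_{\mathcal H},\mathbb L_{\mathcal G}\cap\mathbb L_{\mathcal H},\mathbb E_{\mathcal G}\cap\mathbb E_{\mathcal H})$. *)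

theory Defs
  imports Main
begin

text \<open>Vertices are V = {1..p}; L = {1..q}, R = {q+1..p}.
  A coloured graph is a pair (vertex colour classes, edge colour classes);
  edges are pairs (i,j) with i < j.\<close>

type_synonym cgraph = "nat set set \<times> (nat \<times> nat) set set"

definition twin_pairing :: "nat \<Rightarrow> (nat \<Rightarrow> nat) \<Rightarrow> bool" where
  "twin_pairing p \<tau> \<longleftrightarrow> (\<forall>i\<in>{1..p}. \<tau> i \<in> {1..p} \<and> \<tau> (\<tau> i) = i \<and> \<tau> i \<noteq> i)"

definition tau_edge :: "(nat \<Rightarrow> nat) \<Rightarrow> nat \<times> nat \<Rightarrow> nat \<times> nat" where
  "tau_edge \<tau> e = (min (\<tau> (fst e)) (\<tau> (snd e)), max (\<tau> (fst e)) (\<tau> (snd e)))"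

definition F_V :: "nat \<Rightarrow> (nat \<times> nat) set" where
  "F_V p = {(i,j). i \<in> {1..p} \<and> j \<in> {1..p} \<and> i < j}"

definition F_L :: "nat \<Rightarrow> (nat \<Rightarrow> nat) \<Rightarrow> (nat \<times> nat) set" where
  "F_L p \<tau> = {(i,j) \<in> F_V p. i < \<tau> j}"

definition F_R :: "nat \<Rightarrow> (nat \<Rightarrow> nat) \<Rightarrow> (nat \<times> nat) set" where
  "F_R p \<tau> = {(i,j) \<in> F_V p. i > \<tau> j}"

definition vclasses :: "cgraph \<Rightarrow> nat set set" where "vclasses G = fst G"
definition eclasses :: "cgraph \<Rightarrow> (nat \<times> nat) set set" where "eclasses G = snd G"

definition edges :: "cgraph \<Rightarrow> (nat \<times> nat) set" where "edges G = \<Union> (eclasses G)"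

definition is_partition_of :: "'a set set \<Rightarrow> 'a set \<Rightarrow> bool" where
  "is_partition_of P S \<longleftrightarrow> \<Union> P = S \<and> {} \<notin> P \<and>
     (\<forall>C\<in>P. \<forall>D\<in>P. C \<noteq> D \<longrightarrow> C \<inter> D = {})"

definition is_pdCG :: "nat \<Rightarrow> (nat \<Rightarrow> nat) \<Rightarrow> cgraph \<Rightarrow> bool" where
  "is_pdCG p \<tau> G \<longleftrightarrow>
     is_partition_of (vclasses G) {1..p} \<and>
     edges G \<subseteq> F_V p \<and>
     is_partition_of (eclasses G) (edges G) \<and>
     (\<forall>C\<in>vclasses G. (\<exists>i. C = {i}) \<or> (\<exists>i. C = {i, \<tau> i})) \<and>
     (\<forall>C\<in>eclasses G. (\<exists>e. C = {e}) \<or> (\<exists>e. C = {e, tau_edge \<tau> e} \<and> e \<noteq> tau_edge \<tau> e))"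

text \<open>Quadruplet components (E, LL, EE) of the representation (V, E, LL, EE).\<close>
definition LL :: "nat \<Rightarrow> cgraph \<Rightarrow> nat set" where
  "LL q G = {i \<in> {1..q}. {i} \<in> vclasses G}"

definition EE :: "nat \<Rightarrow> (nat \<Rightarrow> nat) \<Rightarrow> cgraph \<Rightarrow> (nat \<times> nat) set" where
  "EE p \<tau> G = {e \<in> (edges G \<inter> F_L p \<tau>) \<inter> tau_edge \<tau> ` (edges G \<inter> F_R p \<tau>).
                  {e} \<in> eclasses G}"

text \<open>Model inclusion order (combinatorial characterisation of P(H) \<subseteq> P(G)).\<close>
definition s_le :: "cgraph \<Rightarrow> cgraph \<Rightarrow> bool" where
  "s_le H G \<longleftrightarrow> edges H \<subseteq> edges G \<and>
     (\<forall>C\<in>vclasses H. \<exists>S\<subseteq>vclasses G. C = \<Union> S) \<and>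
     (\<forall>C\<in>eclasses H. \<exists>S\<subseteq>eclasses G. C = \<Union> S)"

definition s_less :: "cgraph \<Rightarrow> cgraph \<Rightarrow> bool" where
  "s_less H G \<longleftrightarrow> s_le H G \<and> H \<noteq> G"

definition covered_s :: "nat \<Rightarrow> (nat \<Rightarrow> nat) \<Rightarrow> cgraph \<Rightarrow> cgraph \<Rightarrow> bool" where
  "covered_s p \<tau> H G \<longleftrightarrow> s_less H G \<and>
     \<not> (\<exists>F. is_pdCG p \<tau> F \<and> s_less H F \<and> s_less F G)"

definition t_le :: "nat \<Rightarrow> nat \<Rightarrow> (nat \<Rightarrow> nat) \<Rightarrow> cgraph \<Rightarrow> cgraph \<Rightarrow> bool" where
  "t_le p q \<tau> H G \<longleftrightarrow> edges H \<subseteq> edges G \<and> LL q H \<subseteq> LL q G \<and> EE p \<tau> H \<subseteq> EE p \<tau> G"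

definition meet_s :: "nat \<Rightarrow> (nat \<Rightarrow> nat) \<Rightarrow> cgraph \<Rightarrow> cgraph \<Rightarrow> cgraph" where
  "meet_s p \<tau> G H = (THE M. is_pdCG p \<tau> M \<and> s_le M G \<and> s_le M H \<and>
      (\<forall>K. is_pdCG p \<tau> K \<and> s_le K G \<and> s_le K H \<longrightarrow> s_le K M))"

definition meet_t :: "nat \<Rightarrow> nat \<Rightarrow> (nat \<Rightarrow> nat) \<Rightarrow> cgraph \<Rightarrow> cgraph \<Rightarrow> cgraph" where
  "meet_t p q \<tau> G H = (THE M. is_pdCG p \<tau> M \<and> edges M = edges G \<inter> edges H \<and>
      LL q M = LL q G \<inter> LL q H \<and> EE p \<tau> M = EE p \<tau> G \<inter> EE p \<tau> H)"

end

theory Submission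
  imports Defs
begin

text \<open>
  A pdCG is determined by its edges, its atomic vertices and its atomic edges. The model inclusion
  order compares these three sets; the twin order compares the edges, the atomic vertices and the
  atomic edges whose twin edge is present as well. A lower cover of \<open>G\<close> in the model inclusion
  order makes one twin pair of atomic vertices non-atomic, deletes a non-atomic twin pair of edges
  or a single atomic edge, or makes an atomic twin pair of edges non-atomic.

  So if \<open>F\<close> and \<open>H\<close> are twin-incomparable lower covers of \<open>G\<close>, every common edge whose twin
  is missing from \<open>F\<close> or \<open>H\<close> is atomic in both, and the componentwise twin meet \<open>M\<close> of \<open>F\<close>
  and \<open>H\<close> is also their meet in the model inclusion order. Below \<open>G\<close>, lying twin-below a lower
  cover means avoiding one vertex, edge or paired atomic edge; a twin meet avoids it only if one
  factor does, which keeps the new meets incomparable. Finally, the rank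
  \<open>|atomic vertices| + |atomic edges| + |edges|\<close> is even, grows by exactly \<open>2\<close> along covers
  and satisfies \<open>rank F + rank H \<le> rank M + rank G\<close>; this leaves room for a single covering step
  between \<open>M\<close> and \<open>H\<close>.
\<close>

section \<open>Partitions into singletons and twin pairs\<close>

definition twin_classes :: "('a \<Rightarrow> 'a) \<Rightarrow> 'a set \<Rightarrow> 'a set \<Rightarrow> 'a set set" where
  "twin_classes \<sigma> S A = (\<lambda>x. {x}) ` A \<union> (\<lambda>x. {x, \<sigma> x}) ` (S - A)"

definition twin_atoms :: "('a \<Rightarrow> 'a) \<Rightarrow> 'a set \<Rightarrow> 'a set \<Rightarrow> bool" where
  "twin_atoms \<sigma> S A \<longleftrightarrow> A \<subseteq> S \<and> (\<forall>x \<in> S - A. \<sigma> x \<in> S - A \<and> \<sigma> x \<noteq> x \<and> \<sigma> (\<sigma> x) = x)"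

definition unpaired :: "('a \<Rightarrow> 'a) \<Rightarrow> 'a set \<Rightarrow> 'a set" where
  "unpaired \<sigma> S = {x \<in> S. \<sigma> x \<notin> S \<or> \<sigma> x = x}"

lemma partition_block_eq:
  "is_partition_of P S \<Longrightarrow> C \<in> P \<Longrightarrow> D \<in> P \<Longrightarrow> x \<in> C \<Longrightarrow> x \<in> D \<Longrightarrow> C = D"
  unfolding is_partition_of_def by blast

lemma twin_atomsD:
  assumes "twin_atoms \<sigma> S A" "x \<in> S" "x \<notin> A"
  shows "\<sigma> x \<in> S" "\<sigma> x \<notin> A" "\<sigma> x \<noteq> x" "\<sigma> (\<sigma> x) = x"
  using assms unfolding twin_atoms_def by auto

lemma twin_atoms_subset: "twin_atoms \<sigma> S A \<Longrightarrow> A \<subseteq> S"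
  unfolding twin_atoms_def by blast

lemma twin_atoms_twin:
  assumes "twin_atoms \<sigma> S A" "x \<in> A" "\<sigma> x \<in> S" "\<sigma> (\<sigma> x) = x"
  shows "\<sigma> x \<in> A"
  using twin_atomsD(2)[OF assms(1,3)] assms(2,4) by auto

lemma unpaired_subset_atoms: "twin_atoms \<sigma> S A \<Longrightarrow> unpaired \<sigma> S \<subseteq> A"
  unfolding twin_atoms_def unpaired_def by blast

lemma twin_classes_partition:
  assumes "twin_atoms \<sigma> S A"
  shows "is_partition_of (twin_classes \<sigma> S A) S"
proof -
  have block: "C = (if x \<in> A then {x} else {x, \<sigma> x})" if "C \<in> twin_classes \<sigma> S A" "x \<in> C" for C x
    using that assms unfolding twin_classes_def twin_atoms_def by (auto simp: insert_commute)
  have "\<Union> (twin_classes \<sigma> S A) = S"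
    using assms unfolding twin_classes_def twin_atoms_def by auto
  moreover have "{} \<notin> twin_classes \<sigma> S A"
    unfolding twin_classes_def by auto
  moreover have "C = D" if "C \<in> twin_classes \<sigma> S A" "D \<in> twin_classes \<sigma> S A" "x \<in> C" "x \<in> D" for C D x
    using block that by metis
  ultimately show ?thesis
    unfolding is_partition_of_def by blast
qed

lemma singleton_in_twin_classes_iff:
  "twin_atoms \<sigma> S A \<Longrightarrow> {x} \<in> twin_classes \<sigma> S A \<longleftrightarrow> x \<in> A"
  unfolding twin_classes_def twin_atoms_def by (auto simp: doubleton_eq_iff)

lemma twin_classes_cases:
  "twin_atoms \<sigma> S A \<Longrightarrow> C \<in> twin_classes \<sigma> S A \<Longrightarrow>
    (\<exists>x. C = {x}) \<or> (\<exists>x. C = {x, \<sigma> x} \<and> x \<noteq> \<sigma> x)"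
  unfolding twin_classes_def twin_atoms_def by fastforce

lemma twin_partition_eq_twin_classes:
  assumes P: "is_partition_of P S" and shape: "\<forall>C\<in>P. (\<exists>x. C = {x}) \<or> (\<exists>x. C = {x, \<sigma> x})"
    and inv: "\<forall>x\<in>S. \<sigma> (\<sigma> x) = x"
  shows "twin_atoms \<sigma> S {x. {x} \<in> P}" "P = twin_classes \<sigma> S {x. {x} \<in> P}"
proof -
  let ?A = "{x. {x} \<in> P}"
  have pair: "{x, \<sigma> x} \<in> P \<and> \<sigma> x \<noteq> x" if "x \<in> S" "x \<notin> ?A" for x
  proof -
    obtain C where C: "C \<in> P" "x \<in> C"
      using P \<open>x \<in> S\<close> unfolding is_partition_of_def by blast
    then have "C \<subseteq> S"
      using P unfolding is_partition_of_def by blast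
    from shape C obtain y where "C = {y, \<sigma> y}"
      using \<open>x \<notin> ?A\<close> by auto
    with C \<open>C \<subseteq> S\<close> inv have "C = {x, \<sigma> x}"
      by auto
    with C \<open>x \<notin> ?A\<close> show ?thesis
      by auto
  qed
  show atoms: "twin_atoms \<sigma> S ?A"
    unfolding twin_atoms_def
  proof (intro conjI ballI)
    show "?A \<subseteq> S"
      using P unfolding is_partition_of_def by blast
    fix x assume x: "x \<in> S - ?A"
    with pair have x_pair: "{x, \<sigma> x} \<in> P" "\<sigma> x \<noteq> x"
      by auto
    then have "{\<sigma> x} \<notin> P"
      using partition_block_eq[OF P, of "{\<sigma> x}" "{x, \<sigma> x}" "\<sigma> x"] by auto
    moreover have "\<sigma> x \<in> S"
      using x_pair P unfolding is_partition_of_def by blast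
    ultimately show "\<sigma> x \<in> S - ?A" "\<sigma> x \<noteq> x" "\<sigma> (\<sigma> x) = x"
      using x_pair inv x by auto
  qed
  show "P = twin_classes \<sigma> S ?A"
  proof (intro equalityI subsetI)
    fix C assume C: "C \<in> P"
    then have "C \<subseteq> S"
      using P unfolding is_partition_of_def by blast
    from shape C consider x where "C = {x}" | y where "C = {y, \<sigma> y}"
      by blast
    then show "C \<in> twin_classes \<sigma> S ?A"
    proof cases
      case (2 y)
      show ?thesis
      proof (cases "y \<in> ?A")
        case True
        then have "C = {y}"
          using partition_block_eq[OF P C, of "{y}" y] 2 by simp
        with True show ?thesis
          unfolding twin_classes_def by blast
      next
        case False
        with 2 \<open>C \<subseteq> S\<close> show ?thesis
          unfolding twin_classes_def by blast
      qed
    qed (use C in \<open>auto simp: twin_classes_def\<close>)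
  next
    fix C assume "C \<in> twin_classes \<sigma> S ?A"
    with pair show "C \<in> P"
      unfolding twin_classes_def by auto
  qed
qed

lemma twin_classes_refine_iff:
  assumes A: "twin_atoms \<sigma> S A" and A': "twin_atoms \<sigma> S' A'" and "S \<subseteq> S'"
  shows "(\<forall>C\<in>twin_classes \<sigma> S A. \<exists>Q\<subseteq>twin_classes \<sigma> S' A'. C = \<Union> Q) \<longleftrightarrow> A \<subseteq> A'"
proof
  assume refines: "\<forall>C\<in>twin_classes \<sigma> S A. \<exists>Q\<subseteq>twin_classes \<sigma> S' A'. C = \<Union> Q"
  show "A \<subseteq> A'"
  proof
    fix x assume "x \<in> A"
    then have "{x} \<in> twin_classes \<sigma> S A"
      unfolding twin_classes_def by (intro UnI1 imageI)
    then obtain Q where Q: "Q \<subseteq> twin_classes \<sigma> S' A'" "\<Union> Q = {x}"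
      using refines by (metis (no_types, lifting))
    then obtain D where "D \<in> Q" "x \<in> D"
      by blast
    with Q have "D = {x}" "D \<in> twin_classes \<sigma> S' A'"
      by blast+
    with A' show "x \<in> A'"
      using singleton_in_twin_classes_iff by metis
  qed
next
  assume "A \<subseteq> A'"
  show "\<forall>C\<in>twin_classes \<sigma> S A. \<exists>Q\<subseteq>twin_classes \<sigma> S' A'. C = \<Union> Q"
  proof
    fix C assume "C \<in> twin_classes \<sigma> S A"
    then consider x where "x \<in> A" "C = {x}" | x where "x \<in> S - A" "C = {x, \<sigma> x}"
      unfolding twin_classes_def by blast
    then show "\<exists>Q\<subseteq>twin_classes \<sigma> S' A'. C = \<Union> Q"
    proof cases
      case (1 x)
      with \<open>A \<subseteq> A'\<close> show ?thesis
        by (intro exI[of _ "{{x}}"]) (auto simp: twin_classes_def)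
    next
      case (2 x)
      show ?thesis
      proof (cases "x \<in> A'")
        case True
        have "\<sigma> x \<in> S'" "\<sigma> (\<sigma> x) = x"
          using twin_atomsD[OF A] 2 \<open>S \<subseteq> S'\<close> by auto
        with True have "\<sigma> x \<in> A'"
          by (rule twin_atoms_twin[OF A'])
        with True 2 show ?thesis
          by (intro exI[of _ "{{x}, {\<sigma> x}}"]) (auto simp: twin_classes_def)
      next
        case False
        with 2 \<open>S \<subseteq> S'\<close> show ?thesis
          by (intro exI[of _ "{{x, \<sigma> x}}"]) (auto simp: twin_classes_def)
      qed
    qed
  qed
qed

lemma even_card_Diff_twin_atoms:
  assumes "finite S" and A: "twin_atoms \<sigma> S A"
  shows "even (card (S - A))"
proof -
  let ?P = "(\<lambda>x. {x, \<sigma> x}) ` (S - A)"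
  have "\<Union> ?P = S - A"
    using A unfolding twin_atoms_def by auto
  moreover have "2 * card ?P = card (\<Union> ?P)"
  proof (rule card_partition)
    show "finite ?P" "finite (\<Union> ?P)"
      using \<open>finite S\<close> \<open>\<Union> ?P = S - A\<close> by auto
    show "card C = 2" if "C \<in> ?P" for C
    proof -
      from that obtain x where "x \<in> S - A" "C = {x, \<sigma> x}"
        by blast
      with twin_atomsD(3)[OF A] show ?thesis
        by (metis DiffE card_2_iff)
    qed
    have pair_eq: "{x, \<sigma> x} = {z, \<sigma> z}" if "x \<in> S - A" "z \<in> {x, \<sigma> x}" for x z
      using that twin_atomsD(4)[OF A] by (auto simp: insert_commute)
    show "C \<inter> D = {}" if "C \<in> ?P" "D \<in> ?P" "C \<noteq> D" for C D
    proof (rule ccontr)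
      assume "C \<inter> D \<noteq> {}"
      then obtain z where "z \<in> C" "z \<in> D"
        by blast
      with that(1,2) have "C = {z, \<sigma> z}" "D = {z, \<sigma> z}"
        using pair_eq by blast+
      with \<open>C \<noteq> D\<close> show False
        by simp
    qed
  qed
  ultimately show ?thesis
    by (metis dvd_triv_left)
qed

lemma twin_atoms_Int:
  assumes "twin_atoms \<sigma> S A" "twin_atoms \<sigma> S B"
  shows "twin_atoms \<sigma> S (A \<inter> B)"
  unfolding twin_atoms_def
proof (intro conjI ballI)
  show "A \<inter> B \<subseteq> S"
    using twin_atoms_subset[OF assms(1)] by blast
  fix x assume "x \<in> S - A \<inter> B"
  then consider "x \<in> S - A" | "x \<in> S - B"
    by blast
  then have "\<sigma> x \<in> S - A \<inter> B \<and> \<sigma> x \<noteq> x \<and> \<sigma> (\<sigma> x) = x"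
    by cases (use twin_atomsD[OF assms(1)] twin_atomsD[OF assms(2)] in auto)
  then show "\<sigma> x \<in> S - A \<inter> B" "\<sigma> x \<noteq> x" "\<sigma> (\<sigma> x) = x"
    by blast+
qed

lemma twin_atoms_meet:
  assumes "twin_atoms \<sigma> S A" "twin_atoms \<sigma> S' A'"
  shows "twin_atoms \<sigma> (S \<inter> S') (A \<inter> A' \<union> unpaired \<sigma> (S \<inter> S'))"
  unfolding twin_atoms_def
proof (intro conjI ballI)
  show "A \<inter> A' \<union> unpaired \<sigma> (S \<inter> S') \<subseteq> S \<inter> S'"
    using assms[THEN twin_atoms_subset] by (auto simp: unpaired_def)
  fix x assume x: "x \<in> S \<inter> S' - (A \<inter> A' \<union> unpaired \<sigma> (S \<inter> S'))"
  then have paired: "\<sigma> x \<in> S \<inter> S'" "\<sigma> x \<noteq> x"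
    by (auto simp: unpaired_def)
  from x have "\<sigma> x \<notin> A \<inter> A' \<and> \<sigma> (\<sigma> x) = x"
    using twin_atomsD[OF assms(1)] twin_atomsD[OF assms(2)] by blast
  with paired show "\<sigma> x \<in> S \<inter> S' - (A \<inter> A' \<union> unpaired \<sigma> (S \<inter> S'))" "\<sigma> x \<noteq> x" "\<sigma> (\<sigma> x) = x"
    using x by (auto simp: unpaired_def)
qed

lemma twin_atoms_Diff_twin_atoms:
  assumes A: "twin_atoms \<sigma> S A" and a: "a \<in> A" "\<sigma> a \<in> A" "\<sigma> a \<noteq> a" "\<sigma> (\<sigma> a) = a"
  shows "twin_atoms \<sigma> S (A - {a, \<sigma> a})"
  unfolding twin_atoms_def
proof (intro conjI ballI)
  show "A - {a, \<sigma> a} \<subseteq> S"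
    using twin_atoms_subset[OF A] by blast
  fix x assume "x \<in> S - (A - {a, \<sigma> a})"
  then consider "x \<in> S - A" | "x = a" | "x = \<sigma> a"
    by blast
  then have "\<sigma> x \<in> S - (A - {a, \<sigma> a}) \<and> \<sigma> x \<noteq> x \<and> \<sigma> (\<sigma> x) = x"
    by cases (use twin_atomsD[OF A] twin_atoms_subset[OF A] a in auto)
  then show "\<sigma> x \<in> S - (A - {a, \<sigma> a})" "\<sigma> x \<noteq> x" "\<sigma> (\<sigma> x) = x"
    by blast+
qed

lemma twin_atoms_Diff_twin_pair:
  assumes "twin_atoms \<sigma> S A" "a \<in> S - A"
  shows "twin_atoms \<sigma> (S - {a, \<sigma> a}) A"
  unfolding twin_atoms_def
proof (intro conjI ballI)
  show "A \<subseteq> S - {a, \<sigma> a}"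
    using assms twin_atomsD[OF assms(1)] twin_atoms_subset[OF assms(1)] by auto
  fix x assume x: "x \<in> S - {a, \<sigma> a} - A"
  have a: "\<sigma> (\<sigma> a) = a"
    using assms twin_atomsD(4)[OF assms(1)] by blast
  have "\<sigma> x \<in> S - A" "\<sigma> x \<noteq> x" "\<sigma> (\<sigma> x) = x"
    using x twin_atomsD[OF assms(1)] by auto
  moreover have "\<sigma> x \<notin> {a, \<sigma> a}"
    using x a \<open>\<sigma> (\<sigma> x) = x\<close> by auto
  ultimately show "\<sigma> x \<in> S - {a, \<sigma> a} - A" "\<sigma> x \<noteq> x" "\<sigma> (\<sigma> x) = x"
    by auto
qed

lemma twin_atoms_Diff_atom:
  assumes A: "twin_atoms \<sigma> S A" and "a \<in> A"
  shows "twin_atoms \<sigma> (S - {a}) (A - {a})"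
  unfolding twin_atoms_def
proof (intro conjI ballI)
  show "A - {a} \<subseteq> S - {a}"
    using twin_atoms_subset[OF A] by blast
  fix x assume "x \<in> S - {a} - (A - {a})"
  then have "x \<in> S - A"
    by blast
  with twin_atomsD[OF A] \<open>a \<in> A\<close> show "\<sigma> x \<in> S - {a} - (A - {a})" "\<sigma> x \<noteq> x" "\<sigma> (\<sigma> x) = x"
    by auto
qed

lemma twin_closed_subset_iff:
  assumes "\<forall>x\<in>X. \<sigma> x \<in> X \<and> \<sigma> (\<sigma> x) = x \<and> (x \<in> L \<or> \<sigma> x \<in> L)" and "\<forall>y\<in>Y. \<sigma> y \<in> Y"
  shows "X \<subseteq> Y \<longleftrightarrow> X \<inter> L \<subseteq> Y \<inter> L"
proof
  assume half: "X \<inter> L \<subseteq> Y \<inter> L"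
  show "X \<subseteq> Y"
  proof
    fix x assume "x \<in> X"
    with assms(1) consider "x \<in> L" | "\<sigma> x \<in> X" "\<sigma> (\<sigma> x) = x" "\<sigma> x \<in> L"
      by blast
    then show "x \<in> Y"
    proof cases
      case 2
      with half assms(2) show ?thesis
        by (metis IntI IntD1 subsetD)
    qed (use half \<open>x \<in> X\<close> in blast)
  qed
qed blast

lemma card_Diff_doubleton:
  assumes "finite A" "a \<in> A" "b \<in> A" "a \<noteq> b"
  shows "card (A - {a, b}) + 2 = card A"
proof -
  have "Suc (card (A - {b} - {a})) = card (A - {b})"
    using assms by (intro card_Suc_Diff1) auto
  moreover have "Suc (card (A - {b})) = card A"
    using assms by (intro card_Suc_Diff1) auto
  moreover have "A - {a, b} = A - {b} - {a}"
    by blast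
  ultimately show ?thesis
    by simp
qed

lemma card_add_card_le:
  assumes "finite C" "finite D" "A \<subseteq> C" "B \<subseteq> C" "A \<inter> B \<subseteq> D"
  shows "card A + card B \<le> card D + card C"
proof -
  have "card A + card B = card (A \<union> B) + card (A \<inter> B)"
    using assms by (intro card_Un_Int) (auto intro: finite_subset)
  also have "\<dots> \<le> card C + card D"
    using assms by (intro add_mono card_mono) auto
  finally show ?thesis
    by simp
qed

lemma even_less_le_add_2: "even (a::nat) \<Longrightarrow> even b \<Longrightarrow> a < b \<Longrightarrow> b \<le> a + 2 \<Longrightarrow> b = a + 2"
  by presburger

section \<open>Coloured graphs for paired data as triples\<close>

definition atomic_vertices :: "cgraph \<Rightarrow> nat set" where
  "atomic_vertices K = {i. {i} \<in> vclasses K}"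

definition atomic_edges :: "cgraph \<Rightarrow> (nat \<times> nat) set" where
  "atomic_edges K = {e. {e} \<in> eclasses K}"

definition paired_atomic_edges :: "(nat \<Rightarrow> nat) \<Rightarrow> cgraph \<Rightarrow> (nat \<times> nat) set" where
  "paired_atomic_edges \<tau> K = atomic_edges K - unpaired (tau_edge \<tau>) (edges K)"

locale paired_vertices =
  fixes p q :: nat and \<tau> :: "nat \<Rightarrow> nat"
  assumes twin_pairing: "twin_pairing p \<tau>" and tau_L: "\<tau> ` {1..q} = {q+1..p}"
begin

abbreviation T :: "nat \<times> nat \<Rightarrow> nat \<times> nat" where
  "T \<equiv> tau_edge \<tau>"

lemma tau_mem: "i \<in> {1..p} \<Longrightarrow> \<tau> i \<in> {1..p}"
  and tau_tau: "i \<in> {1..p} \<Longrightarrow> \<tau> (\<tau> i) = i"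
  and tau_neq: "i \<in> {1..p} \<Longrightarrow> \<tau> i \<noteq> i"
  using twin_pairing unfolding twin_pairing_def by blast+

lemma le_q_iff_tau_gt_q:
  assumes "i \<in> {1..p}"
  shows "i \<le> q \<longleftrightarrow> q < \<tau> i"
proof
  assume "i \<le> q"
  with assms have "\<tau> i \<in> \<tau> ` {1..q}"
    by auto
  with tau_L show "q < \<tau> i"
    by auto
next
  assume "q < \<tau> i"
  show "i \<le> q"
  proof (rule ccontr)
    assume "\<not> i \<le> q"
    with assms tau_L obtain k where "k \<in> {1..q}" "i = \<tau> k"
      by (metis atLeastAtMost_iff image_iff not_less_eq_eq Suc_eq_plus1)
    moreover from this tau_L have "\<tau> k \<in> {q+1..p}"
      by blast
    ultimately have "k \<in> {1..p}"
      by auto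
    with \<open>i = \<tau> k\<close> \<open>k \<in> {1..q}\<close> show False
      using \<open>q < \<tau> i\<close> tau_tau by auto
  qed
qed

lemma tau_edge_F_V:
  assumes "e \<in> F_V p"
  shows "T e \<in> F_V p" "T (T e) = e"
proof -
  obtain i j where e: "e = (i, j)" "i \<in> {1..p}" "j \<in> {1..p}" "i < j"
    using assms unfolding F_V_def by auto
  then have "\<tau> i \<noteq> \<tau> j"
    using tau_tau by (metis less_irrefl)
  with e show "T e \<in> F_V p" "T (T e) = e"
    unfolding tau_edge_def F_V_def using tau_mem tau_tau by (auto simp: min_def max_def)
qed

lemma tau_edge_swaps_F_L_F_R:
  assumes "e \<in> F_V p" "T e \<noteq> e"
  shows "(e \<in> F_L p \<tau> \<and> T e \<in> F_R p \<tau>) \<or> (e \<in> F_R p \<tau> \<and> T e \<in> F_L p \<tau>)"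
proof -
  obtain i j where e: "e = (i, j)" "i \<in> {1..p}" "j \<in> {1..p}" "i < j"
    using assms unfolding F_V_def by auto
  have sides: "i \<le> q \<longleftrightarrow> q < \<tau> i" "j \<le> q \<longleftrightarrow> q < \<tau> j"
    using le_q_iff_tau_gt_q e by auto
  have "i \<noteq> \<tau> j"
    using assms e tau_tau unfolding tau_edge_def by auto
  moreover have "\<tau> i \<noteq> \<tau> j"
    using e tau_tau by (metis less_irrefl)
  ultimately show ?thesis
    using e sides tau_edge_F_V[OF assms(1)] tau_mem tau_tau
    unfolding F_L_def F_R_def F_V_def tau_edge_def by (auto simp: min_def max_def)
qed

lemma tau_edge_F_L:
  assumes "e \<in> F_L p \<tau>"
  shows "T e \<in> F_R p \<tau>" "T e \<noteq> e"
proof -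
  have "e \<in> F_V p" "e \<notin> F_R p \<tau>"
    using assms unfolding F_L_def F_R_def by auto
  moreover have "T e \<noteq> e"
  proof
    assume "T e = e"
    with assms obtain i j where "e = (i, j)" "i < \<tau> j" "min (\<tau> i) (\<tau> j) = i" "i \<in> {1..p}" "j \<in> {1..p}"
      unfolding F_L_def F_V_def tau_edge_def by auto
    then show False
      using tau_neq by (metis min_def less_irrefl)
  qed
  ultimately show "T e \<in> F_R p \<tau>" "T e \<noteq> e"
    using tau_edge_swaps_F_L_F_R by blast+
qed

text \<open>A pdCG is encoded by its edges, its atomic vertices and its atomic edges; every other colour
  class is a twin pair. The quadruplet of the paper records the atomic vertices in \<open>L\<close> and the
  paired atomic edges in \<open>F_L\<close> instead (\<open>LL_eq\<close>, \<open>EE_eq\<close>).\<close>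

definition valid_triple :: "(nat \<times> nat) set \<Rightarrow> nat set \<Rightarrow> (nat \<times> nat) set \<Rightarrow> bool" where
  "valid_triple E V A \<longleftrightarrow> E \<subseteq> F_V p \<and> twin_atoms \<tau> {1..p} V \<and> twin_atoms T E A"

definition pdCG_of :: "(nat \<times> nat) set \<Rightarrow> nat set \<Rightarrow> (nat \<times> nat) set \<Rightarrow> cgraph" where
  "pdCG_of E V A = (twin_classes \<tau> {1..p} V, twin_classes T E A)"

context
  fixes E V A
  assumes valid: "valid_triple E V A"
begin

lemma edges_pdCG_of: "edges (pdCG_of E V A) = E"
  using twin_classes_partition[of T E A] valid
  unfolding valid_triple_def pdCG_of_def edges_def eclasses_def is_partition_of_def by simp

lemma atomic_vertices_pdCG_of: "atomic_vertices (pdCG_of E V A) = V"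
  using singleton_in_twin_classes_iff[of \<tau> "{1..p}" V] valid
  unfolding valid_triple_def pdCG_of_def atomic_vertices_def vclasses_def by auto

lemma atomic_edges_pdCG_of: "atomic_edges (pdCG_of E V A) = A"
  using singleton_in_twin_classes_iff[of T E A] valid
  unfolding valid_triple_def pdCG_of_def atomic_edges_def eclasses_def by auto

lemma is_pdCG_pdCG_of: "is_pdCG p \<tau> (pdCG_of E V A)"
proof -
  have V: "twin_atoms \<tau> {1..p} V" and A: "twin_atoms T E A"
    using valid unfolding valid_triple_def by blast+
  show ?thesis
    unfolding is_pdCG_def edges_pdCG_of
  proof (intro conjI)
    show "is_partition_of (vclasses (pdCG_of E V A)) {1..p}"
      "is_partition_of (eclasses (pdCG_of E V A)) E"
      using twin_classes_partition[OF V] twin_classes_partition[OF A]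
      by (simp_all add: pdCG_of_def vclasses_def eclasses_def)
    show "E \<subseteq> F_V p"
      using valid unfolding valid_triple_def by blast
    show "\<forall>C\<in>vclasses (pdCG_of E V A). (\<exists>i. C = {i}) \<or> (\<exists>i. C = {i, \<tau> i})"
      using twin_classes_cases[OF V] by (fastforce simp: pdCG_of_def vclasses_def)
    show "\<forall>C\<in>eclasses (pdCG_of E V A). (\<exists>e. C = {e}) \<or> (\<exists>e. C = {e, T e} \<and> e \<noteq> T e)"
      using twin_classes_cases[OF A] by (simp add: pdCG_of_def eclasses_def)
  qed
qed

end

context
  fixes K
  assumes K: "is_pdCG p \<tau> K"
begin

lemma edges_subset_F_V: "edges K \<subseteq> F_V p"
  using K unfolding is_pdCG_def by blast

lemma vclasses_eq: "vclasses K = twin_classes \<tau> {1..p} (atomic_vertices K)"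
  and atomic_vertices_twin_atoms: "twin_atoms \<tau> {1..p} (atomic_vertices K)"
  using twin_partition_eq_twin_classes[of "vclasses K" "{1..p}" \<tau>] K tau_tau
  unfolding is_pdCG_def atomic_vertices_def by auto

lemma eclasses_eq: "eclasses K = twin_classes T (edges K) (atomic_edges K)"
  and atomic_edges_twin_atoms: "twin_atoms T (edges K) (atomic_edges K)"
proof -
  have "\<forall>C\<in>eclasses K. (\<exists>e. C = {e}) \<or> (\<exists>e. C = {e, T e})"
    using K unfolding is_pdCG_def by blast
  moreover have "\<forall>e\<in>edges K. T (T e) = e"
    using edges_subset_F_V tau_edge_F_V by blast
  ultimately show "eclasses K = twin_classes T (edges K) (atomic_edges K)"
    "twin_atoms T (edges K) (atomic_edges K)"
    using twin_partition_eq_twin_classes[of "eclasses K" "edges K" T] K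
    unfolding is_pdCG_def atomic_edges_def by auto
qed

lemma valid_triple_components: "valid_triple (edges K) (atomic_vertices K) (atomic_edges K)"
  using edges_subset_F_V atomic_vertices_twin_atoms atomic_edges_twin_atoms
  unfolding valid_triple_def by blast

lemma pdCG_of_components: "pdCG_of (edges K) (atomic_vertices K) (atomic_edges K) = K"
  using vclasses_eq eclasses_eq unfolding pdCG_of_def vclasses_def eclasses_def by (metis prod.collapse)

lemma atomic_edges_subset: "atomic_edges K \<subseteq> edges K"
  using twin_atoms_subset[OF atomic_edges_twin_atoms] .

lemma tau_atomic_vertex: "i \<in> atomic_vertices K \<Longrightarrow> \<tau> i \<in> atomic_vertices K"
  using twin_atoms_twin[OF atomic_vertices_twin_atoms] twin_atoms_subset[OF atomic_vertices_twin_atoms]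
    tau_mem tau_tau by blast

lemma tau_edge_tau_edge: "e \<in> edges K \<Longrightarrow> T (T e) = e"
  using edges_subset_F_V tau_edge_F_V by blast

lemma tau_atomic_edge: "e \<in> atomic_edges K \<Longrightarrow> T e \<in> edges K \<Longrightarrow> T e \<in> atomic_edges K"
  using twin_atoms_twin[OF atomic_edges_twin_atoms] atomic_edges_subset tau_edge_tau_edge by blast

lemma tau_nonatomic_edge:
  "e \<in> edges K \<Longrightarrow> e \<notin> atomic_edges K \<Longrightarrow> T e \<in> edges K \<and> T e \<notin> atomic_edges K \<and> T e \<noteq> e"
  using twin_atomsD[OF atomic_edges_twin_atoms] by blast

lemma atomic_edges_eq: "atomic_edges K = paired_atomic_edges \<tau> K \<union> unpaired T (edges K)"
  using unpaired_subset_atoms[OF atomic_edges_twin_atoms] unfolding paired_atomic_edges_def by blast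

end

lemma pdCG_eqI:
  assumes "is_pdCG p \<tau> K" "is_pdCG p \<tau> K'" "edges K = edges K'"
    "atomic_vertices K = atomic_vertices K'" "atomic_edges K = atomic_edges K'"
  shows "K = K'"
  using pdCG_of_components[OF assms(1)] pdCG_of_components[OF assms(2)] assms(3-5) by metis

section \<open>The model inclusion order, the twin order and their meets\<close>

lemma s_le_iff:
  assumes H: "is_pdCG p \<tau> H" and G: "is_pdCG p \<tau> G"
  shows "s_le H G \<longleftrightarrow> edges H \<subseteq> edges G \<and> atomic_vertices H \<subseteq> atomic_vertices G \<and>
    atomic_edges H \<subseteq> atomic_edges G"
proof -
  have V: "(\<forall>C\<in>vclasses H. \<exists>Q\<subseteq>vclasses G. C = \<Union> Q) \<longleftrightarrow> atomic_vertices H \<subseteq> atomic_vertices G"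
    unfolding vclasses_eq[OF H] vclasses_eq[OF G]
    using twin_classes_refine_iff[OF atomic_vertices_twin_atoms[OF H] atomic_vertices_twin_atoms[OF G]]
    by blast
  have E: "(\<forall>C\<in>eclasses H. \<exists>Q\<subseteq>eclasses G. C = \<Union> Q) \<longleftrightarrow> atomic_edges H \<subseteq> atomic_edges G"
    if "edges H \<subseteq> edges G"
    unfolding eclasses_eq[OF H] eclasses_eq[OF G]
    using twin_classes_refine_iff[OF atomic_edges_twin_atoms[OF H] atomic_edges_twin_atoms[OF G] that] .
  show ?thesis
    by (cases "edges H \<subseteq> edges G") (simp_all add: s_le_def V E)
qed

lemma s_antisym:
  assumes "is_pdCG p \<tau> H" "is_pdCG p \<tau> G" "s_le H G" "s_le G H"
  shows "H = G"
proof -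
  have "edges H = edges G \<and> atomic_vertices H = atomic_vertices G \<and> atomic_edges H = atomic_edges G"
    using assms(3,4) unfolding s_le_iff[OF assms(1,2)] s_le_iff[OF assms(2,1)] by blast
  then show ?thesis
    using pdCG_eqI[OF assms(1,2)] by blast
qed

lemma LL_eq: "LL q K = atomic_vertices K \<inter> {1..q}"
  unfolding LL_def atomic_vertices_def by blast

lemma tau_paired_atomic_edge:
  assumes K: "is_pdCG p \<tau> K" and e: "e \<in> paired_atomic_edges \<tau> K"
  shows "T e \<in> paired_atomic_edges \<tau> K"
proof -
  from e have "e \<in> atomic_edges K" "T e \<in> edges K" "T e \<noteq> e"
    unfolding paired_atomic_edges_def unpaired_def by (auto dest: subsetD[OF atomic_edges_subset[OF K]])
  moreover from this have "T (T e) = e"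
    using tau_edge_tau_edge[OF K] atomic_edges_subset[OF K] by blast
  ultimately show ?thesis
    using tau_atomic_edge[OF K] atomic_edges_subset[OF K]
    unfolding paired_atomic_edges_def unpaired_def by auto
qed

lemma EE_eq:
  assumes K: "is_pdCG p \<tau> K"
  shows "EE p \<tau> K = paired_atomic_edges \<tau> K \<inter> F_L p \<tau>"
proof (intro equalityI subsetI)
  fix e assume "e \<in> EE p \<tau> K"
  then obtain y where e: "e \<in> atomic_edges K" "e \<in> F_L p \<tau>" "y \<in> edges K" "e = T y"
    unfolding EE_def atomic_edges_def by blast
  then have "T e \<in> edges K"
    using tau_edge_tau_edge[OF K] by simp
  with e show "e \<in> paired_atomic_edges \<tau> K \<inter> F_L p \<tau>"
    using tau_edge_F_L(2)[OF \<open>e \<in> F_L p \<tau>\<close>] unfolding paired_atomic_edges_def unpaired_def by blast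
next
  fix e assume e: "e \<in> paired_atomic_edges \<tau> K \<inter> F_L p \<tau>"
  then have "e \<in> atomic_edges K" "e \<in> edges K" "T e \<in> edges K" "T e \<in> F_R p \<tau>"
    using atomic_edges_subset[OF K] tau_edge_F_L(1)
    unfolding paired_atomic_edges_def unpaired_def by auto
  moreover have "e = T (T e)"
    using tau_edge_tau_edge[OF K] \<open>e \<in> edges K\<close> by simp
  ultimately show "e \<in> EE p \<tau> K"
    using e unfolding EE_def atomic_edges_def by blast
qed

lemma t_le_iff:
  assumes H: "is_pdCG p \<tau> H" and G: "is_pdCG p \<tau> G"
  shows "t_le p q \<tau> H G \<longleftrightarrow> edges H \<subseteq> edges G \<and> atomic_vertices H \<subseteq> atomic_vertices G \<and>
    paired_atomic_edges \<tau> H \<subseteq> paired_atomic_edges \<tau> G"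
proof -
  have "atomic_vertices H \<subseteq> atomic_vertices G \<longleftrightarrow>
      atomic_vertices H \<inter> {1..q} \<subseteq> atomic_vertices G \<inter> {1..q}"
  proof (rule twin_closed_subset_iff)
    show "\<forall>i\<in>atomic_vertices G. \<tau> i \<in> atomic_vertices G"
      using tau_atomic_vertex[OF G] by blast
    have "i \<in> {1..q} \<or> \<tau> i \<in> {1..q}" if "i \<in> {1..p}" for i
      using that le_q_iff_tau_gt_q[OF tau_mem[OF that]] tau_tau[OF that] tau_mem[OF that] by auto
    then show "\<forall>i\<in>atomic_vertices H. \<tau> i \<in> atomic_vertices H \<and> \<tau> (\<tau> i) = i \<and>
        (i \<in> {1..q} \<or> \<tau> i \<in> {1..q})"
      using tau_atomic_vertex[OF H] twin_atoms_subset[OF atomic_vertices_twin_atoms[OF H]] tau_tau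
      by blast
  qed
  moreover have "paired_atomic_edges \<tau> H \<subseteq> paired_atomic_edges \<tau> G \<longleftrightarrow>
      paired_atomic_edges \<tau> H \<inter> F_L p \<tau> \<subseteq> paired_atomic_edges \<tau> G \<inter> F_L p \<tau>"
  proof (rule twin_closed_subset_iff)
    show "\<forall>e\<in>paired_atomic_edges \<tau> G. T e \<in> paired_atomic_edges \<tau> G"
      using tau_paired_atomic_edge[OF G] by blast
    have "e \<in> edges H" "T e \<noteq> e" if "e \<in> paired_atomic_edges \<tau> H" for e
      using that atomic_edges_subset[OF H] unfolding paired_atomic_edges_def unpaired_def by auto
    then show "\<forall>e\<in>paired_atomic_edges \<tau> H. T e \<in> paired_atomic_edges \<tau> H \<and> T (T e) = e \<and>
        (e \<in> F_L p \<tau> \<or> T e \<in> F_L p \<tau>)"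
      using tau_paired_atomic_edge[OF H] tau_edge_tau_edge[OF H] tau_edge_swaps_F_L_F_R
        edges_subset_F_V[OF H] by blast
  qed
  ultimately show ?thesis
    unfolding t_le_def LL_eq EE_eq[OF H] EE_eq[OF G] by blast
qed

lemma t_antisym:
  assumes "is_pdCG p \<tau> H" "is_pdCG p \<tau> G" "t_le p q \<tau> H G" "t_le p q \<tau> G H"
  shows "H = G"
proof -
  have "edges H = edges G \<and> atomic_vertices H = atomic_vertices G \<and>
      paired_atomic_edges \<tau> H = paired_atomic_edges \<tau> G"
    using assms(3,4) unfolding t_le_iff[OF assms(1,2)] t_le_iff[OF assms(2,1)] by blast
  moreover from this have "atomic_edges H = atomic_edges G"
    unfolding atomic_edges_eq[OF assms(1)] atomic_edges_eq[OF assms(2)] by simp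
  ultimately show ?thesis
    using pdCG_eqI[OF assms(1,2)] by blast
qed

lemma t_le_trans: "t_le p q \<tau> F G \<Longrightarrow> t_le p q \<tau> G H \<Longrightarrow> t_le p q \<tau> F H"
  unfolding t_le_def by blast

lemma paired_atomic_edges_mono:
  assumes "is_pdCG p \<tau> H" "edges H \<subseteq> edges G" "atomic_edges H \<subseteq> atomic_edges G"
  shows "paired_atomic_edges \<tau> H \<subseteq> paired_atomic_edges \<tau> G"
  using assms(2,3) atomic_edges_subset[OF assms(1)] unfolding paired_atomic_edges_def unpaired_def by blast

text \<open>Common edges whose twin is lost in the intersection must become atomic. The model inclusion
  order allows this only if they are atomic in both graphs, hence the compatibility hypothesis
  of \<open>meet_s_eq\<close>.\<close>

definition twin_meet :: "cgraph \<Rightarrow> cgraph \<Rightarrow> cgraph" where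
  "twin_meet F H = pdCG_of (edges F \<inter> edges H) (atomic_vertices F \<inter> atomic_vertices H)
     (atomic_edges F \<inter> atomic_edges H \<union> unpaired T (edges F \<inter> edges H))"

context
  fixes F H
  assumes F: "is_pdCG p \<tau> F" and H: "is_pdCG p \<tau> H"
begin

lemma valid_triple_twin_meet:
  "valid_triple (edges F \<inter> edges H) (atomic_vertices F \<inter> atomic_vertices H)
     (atomic_edges F \<inter> atomic_edges H \<union> unpaired T (edges F \<inter> edges H))"
  using edges_subset_F_V[OF F] twin_atoms_Int[OF atomic_vertices_twin_atoms[OF F] atomic_vertices_twin_atoms[OF H]]
    twin_atoms_meet[OF atomic_edges_twin_atoms[OF F] atomic_edges_twin_atoms[OF H]]
  unfolding valid_triple_def by blast

lemma is_pdCG_twin_meet: "is_pdCG p \<tau> (twin_meet F H)"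
  and edges_twin_meet: "edges (twin_meet F H) = edges F \<inter> edges H"
  and atomic_vertices_twin_meet: "atomic_vertices (twin_meet F H) = atomic_vertices F \<inter> atomic_vertices H"
  and atomic_edges_twin_meet: "atomic_edges (twin_meet F H) =
    atomic_edges F \<inter> atomic_edges H \<union> unpaired T (edges F \<inter> edges H)"
  unfolding twin_meet_def
  by (rule is_pdCG_pdCG_of edges_pdCG_of atomic_vertices_pdCG_of atomic_edges_pdCG_of,
      rule valid_triple_twin_meet)+

lemma paired_atomic_edges_twin_meet:
  "paired_atomic_edges \<tau> (twin_meet F H) = paired_atomic_edges \<tau> F \<inter> paired_atomic_edges \<tau> H"
  using atomic_edges_subset[OF F] atomic_edges_subset[OF H]
  unfolding paired_atomic_edges_def edges_twin_meet atomic_edges_twin_meet unpaired_def by auto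

lemma twin_meet_t_le: "t_le p q \<tau> (twin_meet F H) F" "t_le p q \<tau> (twin_meet F H) H"
  unfolding t_le_iff[OF is_pdCG_twin_meet F] t_le_iff[OF is_pdCG_twin_meet H]
    edges_twin_meet atomic_vertices_twin_meet paired_atomic_edges_twin_meet by blast+

lemma meet_t_eq: "meet_t p q \<tau> F H = twin_meet F H"
  unfolding meet_t_def
proof (rule the_equality)
  have LL: "LL q (twin_meet F H) = LL q F \<inter> LL q H"
    unfolding LL_eq atomic_vertices_twin_meet by blast
  have EE: "EE p \<tau> (twin_meet F H) = EE p \<tau> F \<inter> EE p \<tau> H"
    unfolding EE_eq[OF is_pdCG_twin_meet] EE_eq[OF F] EE_eq[OF H] paired_atomic_edges_twin_meet by blast
  show "is_pdCG p \<tau> (twin_meet F H) \<and> edges (twin_meet F H) = edges F \<inter> edges H \<and>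
      LL q (twin_meet F H) = LL q F \<inter> LL q H \<and> EE p \<tau> (twin_meet F H) = EE p \<tau> F \<inter> EE p \<tau> H"
    using is_pdCG_twin_meet edges_twin_meet LL EE by blast
  fix M
  assume "is_pdCG p \<tau> M \<and> edges M = edges F \<inter> edges H \<and>
      LL q M = LL q F \<inter> LL q H \<and> EE p \<tau> M = EE p \<tau> F \<inter> EE p \<tau> H"
  with LL EE show "M = twin_meet F H"
    using t_antisym[OF _ is_pdCG_twin_meet] edges_twin_meet unfolding t_le_def by auto
qed

lemma twin_meet_s_le_factors:
  assumes compatible: "unpaired T (edges F \<inter> edges H) \<subseteq> atomic_edges F \<inter> atomic_edges H"
  shows "s_le (twin_meet F H) F" "s_le (twin_meet F H) H"
  using compatible
  unfolding s_le_iff[OF is_pdCG_twin_meet F] s_le_iff[OF is_pdCG_twin_meet H]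
    edges_twin_meet atomic_vertices_twin_meet atomic_edges_twin_meet by blast+

lemma meet_s_eq:
  assumes compatible: "unpaired T (edges F \<inter> edges H) \<subseteq> atomic_edges F \<inter> atomic_edges H"
  shows "meet_s p \<tau> F H = twin_meet F H"
  unfolding meet_s_def
proof (rule the_equality)
  let ?M = "twin_meet F H"
  note lower = twin_meet_s_le_factors[OF compatible]
  have greatest: "s_le K ?M" if "is_pdCG p \<tau> K" "s_le K F" "s_le K H" for K
    using that unfolding s_le_iff[OF that(1) F] s_le_iff[OF that(1) H] s_le_iff[OF that(1) is_pdCG_twin_meet]
      edges_twin_meet atomic_vertices_twin_meet atomic_edges_twin_meet by blast
  show "is_pdCG p \<tau> ?M \<and> s_le ?M F \<and> s_le ?M H \<and>
      (\<forall>K. is_pdCG p \<tau> K \<and> s_le K F \<and> s_le K H \<longrightarrow> s_le K ?M)"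
    using is_pdCG_twin_meet lower greatest by blast
  fix M
  assume "is_pdCG p \<tau> M \<and> s_le M F \<and> s_le M H \<and>
      (\<forall>K. is_pdCG p \<tau> K \<and> s_le K F \<and> s_le K H \<longrightarrow> s_le K M)"
  then show "M = ?M"
    using s_antisym[OF _ is_pdCG_twin_meet] greatest is_pdCG_twin_meet lower by blast
qed

end

lemma twin_meet_s_le:
  assumes X: "is_pdCG p \<tau> X" and Y: "is_pdCG p \<tau> Y" and G: "is_pdCG p \<tau> G"
    and "s_le X G" "s_le Y G"
  shows "s_le (twin_meet X Y) G"
proof -
  have "unpaired T (edges X \<inter> edges Y) \<subseteq> unpaired T (edges X) \<union> unpaired T (edges Y)"
    unfolding unpaired_def by blast
  also have "\<dots> \<subseteq> atomic_edges X \<union> atomic_edges Y"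
    using unpaired_subset_atoms[OF atomic_edges_twin_atoms[OF X]]
      unpaired_subset_atoms[OF atomic_edges_twin_atoms[OF Y]] by blast
  finally show ?thesis
    using assms(4,5) unfolding s_le_iff[OF is_pdCG_twin_meet[OF X Y] G] s_le_iff[OF X G] s_le_iff[OF Y G]
      edges_twin_meet[OF X Y] atomic_vertices_twin_meet[OF X Y] atomic_edges_twin_meet[OF X Y] by blast
qed

section \<open>Lower covers in the model inclusion order\<close>

lemma covered_s_le: "covered_s p \<tau> F G \<Longrightarrow> s_le F G"
  unfolding covered_s_def s_less_def by blast

lemma covered_s_between_eq:
  assumes F: "is_pdCG p \<tau> F" and G: "is_pdCG p \<tau> G" and cov: "covered_s p \<tau> F G"
    and valid: "valid_triple E V A"
    and above: "edges F \<subseteq> E" "atomic_vertices F \<subseteq> V" "atomic_edges F \<subseteq> A"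
    and below: "E \<subseteq> edges G" "V \<subseteq> atomic_vertices G" "A \<subseteq> atomic_edges G"
    and strict: "(E, V, A) \<noteq> (edges G, atomic_vertices G, atomic_edges G)"
  shows "edges F = E \<and> atomic_vertices F = V \<and> atomic_edges F = A"
proof -
  let ?K = "pdCG_of E V A"
  note K = is_pdCG_pdCG_of[OF valid] edges_pdCG_of[OF valid] atomic_vertices_pdCG_of[OF valid]
    atomic_edges_pdCG_of[OF valid]
  have "s_le F ?K" "s_le ?K G" "?K \<noteq> G"
    using above below strict s_le_iff[OF F K(1)] s_le_iff[OF K(1) G] K(2-4) by auto
  with cov K(1) have "F = ?K"
    unfolding covered_s_def s_less_def by blast
  with K(2-4) show ?thesis
    by simp
qed

context
  fixes F G
  assumes F: "is_pdCG p \<tau> F" and G: "is_pdCG p \<tau> G" and cov: "covered_s p \<tau> F G"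
begin

lemma lower_cover_below:
  "edges F \<subseteq> edges G" "atomic_vertices F \<subseteq> atomic_vertices G" "atomic_edges F \<subseteq> atomic_edges G"
  using covered_s_le[OF cov] unfolding s_le_iff[OF F G] by blast+

lemma lower_cover_atomic_vertices:
  assumes "atomic_vertices F \<noteq> atomic_vertices G"
  obtains i where "i \<in> atomic_vertices G" "atomic_vertices F = atomic_vertices G - {i, \<tau> i}"
    "edges F = edges G" "atomic_edges F = atomic_edges G"
proof -
  obtain i where i: "i \<in> atomic_vertices G" "i \<notin> atomic_vertices F"
    using assms lower_cover_below by blast
  have "i \<in> {1..p}"
    using i twin_atoms_subset[OF atomic_vertices_twin_atoms[OF G]] by blast
  have "twin_atoms \<tau> {1..p} (atomic_vertices G - {i, \<tau> i})"
    by (rule twin_atoms_Diff_twin_atoms[OF atomic_vertices_twin_atoms[OF G] i(1)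
          tau_atomic_vertex[OF G i(1)] tau_neq tau_tau]) (use \<open>i \<in> {1..p}\<close> in simp_all)
  then have valid: "valid_triple (edges G) (atomic_vertices G - {i, \<tau> i}) (atomic_edges G)"
    using valid_triple_components[OF G] unfolding valid_triple_def by blast
  have "\<tau> i \<notin> atomic_vertices F"
    using i(2) tau_atomic_vertex[OF F] tau_tau[OF \<open>i \<in> {1..p}\<close>] by metis
  then have "atomic_vertices F \<subseteq> atomic_vertices G - {i, \<tau> i}"
    using i(2) lower_cover_below(2) by blast
  then have "edges F = edges G \<and> atomic_vertices F = atomic_vertices G - {i, \<tau> i} \<and>
      atomic_edges F = atomic_edges G"
    by (rule covered_s_between_eq[OF F G cov valid lower_cover_below(1) _ lower_cover_below(3)])
      (use i(1) in auto)
  with i(1) that show ?thesis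
    by blast
qed

lemma lower_cover_edges:
  assumes "edges F \<noteq> edges G" "atomic_vertices F = atomic_vertices G"
  obtains (edge_pair) e where "e \<in> edges G - atomic_edges G" "edges F = edges G - {e, T e}"
    "atomic_edges F = atomic_edges G"
  | (atomic_edge) e where "e \<in> atomic_edges G" "edges F = edges G - {e}"
    "atomic_edges F = atomic_edges G - {e}"
proof -
  obtain e where e: "e \<in> edges G" "e \<notin> edges F"
    using assms lower_cover_below by blast
  have E: "edges G \<subseteq> F_V p" and V: "twin_atoms \<tau> {1..p} (atomic_vertices G)"
    and A: "twin_atoms T (edges G) (atomic_edges G)"
    using valid_triple_components[OF G] unfolding valid_triple_def by blast+
  show ?thesis
  proof (cases "e \<in> atomic_edges G")
    case False
    have valid: "valid_triple (edges G - {e, T e}) (atomic_vertices G) (atomic_edges G)"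
      using E V twin_atoms_Diff_twin_pair[OF A] e(1) False unfolding valid_triple_def by blast
    have "T e \<notin> edges F"
    proof
      assume "T e \<in> edges F"
      moreover have "T e \<notin> atomic_edges F"
        using tau_nonatomic_edge[OF G e(1) False] lower_cover_below(3) by blast
      ultimately have "T (T e) \<in> edges F"
        using tau_nonatomic_edge[OF F] by blast
      with e show False
        using tau_edge_tau_edge[OF G e(1)] by simp
    qed
    then have "edges F = edges G - {e, T e} \<and> atomic_vertices F = atomic_vertices G \<and>
        atomic_edges F = atomic_edges G"
      using covered_s_between_eq[OF F G cov valid] e lower_cover_below assms(2) atomic_edges_subset[OF G]
      by auto
    with e False edge_pair show ?thesis
      by blast
  next
    case True
    have "valid_triple (edges G - {e}) (atomic_vertices G) (atomic_edges G - {e})"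
      using E V twin_atoms_Diff_atom[OF A True] unfolding valid_triple_def by blast
    then have "edges F = edges G - {e} \<and> atomic_vertices F = atomic_vertices G \<and>
        atomic_edges F = atomic_edges G - {e}"
      by (rule covered_s_between_eq[OF F G cov])
        (use e lower_cover_below assms(2) atomic_edges_subset[OF F] in auto)
    with True atomic_edge show ?thesis
      by blast
  qed
qed

lemma lower_cover_atomic_edges:
  assumes "edges F = edges G" "atomic_vertices F = atomic_vertices G"
  obtains e where "e \<in> atomic_edges G" "T e \<in> atomic_edges G" "T e \<noteq> e"
    "atomic_edges F = atomic_edges G - {e, T e}"
proof -
  have "F \<noteq> G"
    using cov unfolding covered_s_def s_less_def by blast
  then obtain e where e: "e \<in> atomic_edges G" "e \<notin> atomic_edges F"
    using assms lower_cover_below(3) pdCG_eqI[OF F G] by blast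
  then have "e \<in> edges F"
    using assms(1) atomic_edges_subset[OF G] by blast
  with e have Te: "T e \<in> edges F" "T e \<notin> atomic_edges F" "T e \<noteq> e"
    using tau_nonatomic_edge[OF F] by blast+
  then have Te_G: "T e \<in> atomic_edges G"
    using tau_atomic_edge[OF G e(1)] assms(1) by blast
  have "twin_atoms T (edges G) (atomic_edges G - {e, T e})"
    by (rule twin_atoms_Diff_twin_atoms[OF atomic_edges_twin_atoms[OF G] e(1) Te_G Te(3)])
      (use tau_edge_tau_edge[OF F \<open>e \<in> edges F\<close>] in simp)
  then have "valid_triple (edges G) (atomic_vertices G) (atomic_edges G - {e, T e})"
    using valid_triple_components[OF G] unfolding valid_triple_def by blast
  then have "edges F = edges G \<and> atomic_vertices F = atomic_vertices G \<and>
      atomic_edges F = atomic_edges G - {e, T e}"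
    by (rule covered_s_between_eq[OF F G cov]) (use assms e Te lower_cover_below(3) in auto)
  with e(1) Te_G Te(3) that show ?thesis
    by blast
qed

end

lemma lower_cover_cases:
  assumes F: "is_pdCG p \<tau> F" and G: "is_pdCG p \<tau> G" and cov: "covered_s p \<tau> F G"
  obtains (vertex_pair) i where "i \<in> atomic_vertices G"
    "atomic_vertices F = atomic_vertices G - {i, \<tau> i}" "edges F = edges G" "atomic_edges F = atomic_edges G"
  | (edge_pair) e where "e \<in> edges G - atomic_edges G" "edges F = edges G - {e, T e}"
    "atomic_vertices F = atomic_vertices G" "atomic_edges F = atomic_edges G"
  | (atomic_edge) e where "e \<in> atomic_edges G" "edges F = edges G - {e}"
    "atomic_vertices F = atomic_vertices G" "atomic_edges F = atomic_edges G - {e}"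
  | (atomic_pair) e where "e \<in> atomic_edges G" "T e \<in> atomic_edges G" "T e \<noteq> e"
    "edges F = edges G" "atomic_vertices F = atomic_vertices G" "atomic_edges F = atomic_edges G - {e, T e}"
proof (cases "atomic_vertices F = atomic_vertices G")
  case False
  obtain i where "i \<in> atomic_vertices G" "atomic_vertices F = atomic_vertices G - {i, \<tau> i}"
    "edges F = edges G" "atomic_edges F = atomic_edges G"
    by (rule lower_cover_atomic_vertices[OF F G cov False])
  then show ?thesis
    by (rule that(1))
next
  case V: True
  show ?thesis
  proof (cases "edges F = edges G")
    case False
    from F G cov False V show ?thesis
    proof (cases rule: lower_cover_edges)
      case (edge_pair e)
      then show ?thesis
        using that(2) V by blast
    next
      case (atomic_edge e)
      then show ?thesis
        using that(3) V by blast
    qed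
  next
    case True
    obtain e where "e \<in> atomic_edges G" "T e \<in> atomic_edges G" "T e \<noteq> e"
      "atomic_edges F = atomic_edges G - {e, T e}"
      by (rule lower_cover_atomic_edges[OF F G cov True V])
    with that(4) True V show ?thesis
      by blast
  qed
qed

lemma s_le_subsets:
  assumes X: "is_pdCG p \<tau> X" and G: "is_pdCG p \<tau> G" and "s_le X G"
  shows "edges X \<subseteq> edges G" "atomic_vertices X \<subseteq> atomic_vertices G" "atomic_edges X \<subseteq> atomic_edges G"
    "paired_atomic_edges \<tau> X \<subseteq> paired_atomic_edges \<tau> G"
  using assms(3) paired_atomic_edges_mono[OF X] unfolding s_le_iff[OF X G] by blast+

context
  fixes X F G
  assumes X: "is_pdCG p \<tau> X" and F: "is_pdCG p \<tau> F" and G: "is_pdCG p \<tau> G" and XG: "s_le X G"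
begin

lemma t_le_vertex_pair_removed_iff:
  assumes "i \<in> atomic_vertices G" "atomic_vertices F = atomic_vertices G - {i, \<tau> i}"
    "edges F = edges G" "atomic_edges F = atomic_edges G"
  shows "t_le p q \<tau> X F \<longleftrightarrow> i \<notin> atomic_vertices X"
proof -
  have "i \<in> {1..p}"
    using assms(1) twin_atoms_subset[OF atomic_vertices_twin_atoms[OF G]] by blast
  then have "\<tau> i \<in> atomic_vertices X \<longleftrightarrow> i \<in> atomic_vertices X"
    using tau_atomic_vertex[OF X] tau_tau by metis
  moreover have "paired_atomic_edges \<tau> F = paired_atomic_edges \<tau> G"
    unfolding paired_atomic_edges_def assms(3,4) ..
  ultimately show ?thesis
    unfolding t_le_iff[OF X F] using s_le_subsets[OF X G XG] assms(2,3) by auto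
qed

lemma t_le_edge_pair_removed_iff:
  assumes e: "e \<in> edges G - atomic_edges G" and "edges F = edges G - {e, T e}"
    "atomic_vertices F = atomic_vertices G" "atomic_edges F = atomic_edges G"
  shows "t_le p q \<tau> X F \<longleftrightarrow> e \<notin> edges X"
proof -
  have Te: "T e \<notin> atomic_edges G" "T (T e) = e"
    using tau_nonatomic_edge[OF G] tau_edge_tau_edge[OF G] e by blast+
  have "T e \<in> edges X \<Longrightarrow> e \<in> edges X"
    using tau_nonatomic_edge[OF X, of "T e"] Te s_le_subsets(3)[OF X G XG] by auto
  moreover have "paired_atomic_edges \<tau> F = paired_atomic_edges \<tau> G"
  proof -
    have "T x \<noteq> e \<and> T x \<noteq> T e" if "x \<in> atomic_edges G" for x
    proof -
      have "T (T x) = x"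
        using tau_edge_tau_edge[OF G] atomic_edges_subset[OF G] that by blast
      with that e Te show ?thesis
        by (metis DiffD2)
    qed
    then show ?thesis
      unfolding paired_atomic_edges_def unpaired_def assms(2,4) using e Te by auto
  qed
  ultimately show ?thesis
    unfolding t_le_iff[OF X F] using s_le_subsets[OF X G XG] assms(2,3) by auto
qed

lemma t_le_atomic_edge_removed_iff:
  assumes "e \<in> atomic_edges G" "edges F = edges G - {e}"
    "atomic_vertices F = atomic_vertices G" "atomic_edges F = atomic_edges G - {e}"
  shows "t_le p q \<tau> X F \<longleftrightarrow> e \<notin> edges X"
proof
  assume "t_le p q \<tau> X F"
  then show "e \<notin> edges X"
    unfolding t_le_iff[OF X F] assms(2) by blast
next
  assume "e \<notin> edges X"
  then have "paired_atomic_edges \<tau> X \<subseteq> paired_atomic_edges \<tau> F"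
    using s_le_subsets[OF X G XG] atomic_edges_subset[OF X]
    unfolding paired_atomic_edges_def unpaired_def assms(2,4) by blast
  with \<open>e \<notin> edges X\<close> show "t_le p q \<tau> X F"
    unfolding t_le_iff[OF X F] using s_le_subsets[OF X G XG] assms(2,3) by blast
qed

lemma t_le_atomic_pair_merged_iff:
  assumes "e \<in> atomic_edges G" "T e \<in> atomic_edges G" "T e \<noteq> e" "edges F = edges G"
    "atomic_vertices F = atomic_vertices G" "atomic_edges F = atomic_edges G - {e, T e}"
  shows "t_le p q \<tau> X F \<longleftrightarrow> e \<notin> paired_atomic_edges \<tau> X"
proof -
  have "T (T e) = e"
    using tau_edge_tau_edge[OF G] atomic_edges_subset[OF G] assms(1) by blast
  then have "T e \<in> paired_atomic_edges \<tau> X \<longleftrightarrow> e \<in> paired_atomic_edges \<tau> X"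
    using tau_paired_atomic_edge[OF X] by metis
  moreover have "paired_atomic_edges \<tau> F = paired_atomic_edges \<tau> G - {e, T e}"
    unfolding paired_atomic_edges_def assms(4,6) by blast
  ultimately show ?thesis
    unfolding t_le_iff[OF X F] using s_le_subsets[OF X G XG] assms(4,5) by auto
qed

end

text \<open>By the four lemmas above, a graph below \<open>G\<close> is twin-below a lower cover of \<open>G\<close> iff it avoids
  one particular vertex, edge or paired atomic edge, and a twin meet avoids it iff a factor does.\<close>

lemma t_le_lower_cover_twin_meet:
  assumes X: "is_pdCG p \<tau> X" and Y: "is_pdCG p \<tau> Y" and F: "is_pdCG p \<tau> F" and G: "is_pdCG p \<tau> G"
    and cov: "covered_s p \<tau> F G" and XG: "s_le X G" and YG: "s_le Y G"
    and le: "t_le p q \<tau> (twin_meet X Y) F"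
  shows "t_le p q \<tau> X F \<or> t_le p q \<tau> Y F"
proof -
  note M = is_pdCG_twin_meet[OF X Y] twin_meet_s_le[OF X Y G XG YG]
  from F G cov show ?thesis
  proof (cases rule: lower_cover_cases)
    case (vertex_pair i)
    note iff = t_le_vertex_pair_removed_iff[OF _ F G _ vertex_pair]
    have "i \<notin> atomic_vertices X \<inter> atomic_vertices Y"
      using le iff[OF M] atomic_vertices_twin_meet[OF X Y] by simp
    then show ?thesis
      using iff[OF X XG] iff[OF Y YG] by blast
  next
    case (edge_pair e)
    note iff = t_le_edge_pair_removed_iff[OF _ F G _ edge_pair]
    have "e \<notin> edges X \<inter> edges Y"
      using le iff[OF M] edges_twin_meet[OF X Y] by simp
    then show ?thesis
      using iff[OF X XG] iff[OF Y YG] by blast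
  next
    case (atomic_edge e)
    note iff = t_le_atomic_edge_removed_iff[OF _ F G _ atomic_edge]
    have "e \<notin> edges X \<inter> edges Y"
      using le iff[OF M] edges_twin_meet[OF X Y] by simp
    then show ?thesis
      using iff[OF X XG] iff[OF Y YG] by blast
  next
    case (atomic_pair e)
    note iff = t_le_atomic_pair_merged_iff[OF _ F G _ atomic_pair]
    have "e \<notin> paired_atomic_edges \<tau> X \<inter> paired_atomic_edges \<tau> Y"
      using le iff[OF M] paired_atomic_edges_twin_meet[OF X Y] by simp
    then show ?thesis
      using iff[OF X XG] iff[OF Y YG] by blast
  qed
qed

text \<open>If \<open>e\<close> were not atomic in \<open>H\<close>, then \<open>H\<close> would be the lower cover making the atomic twin
  pair \<open>{e, T e}\<close> of \<open>G\<close> non-atomic, and \<open>F\<close>, which lacks \<open>T e\<close>, would lie twin-below it.\<close>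

lemma atomic_if_twin_missing:
  assumes F: "is_pdCG p \<tau> F" and H: "is_pdCG p \<tau> H" and G: "is_pdCG p \<tau> G"
    and covF: "covered_s p \<tau> F G" and covH: "covered_s p \<tau> H G" and not_le: "\<not> t_le p q \<tau> F H"
    and e: "e \<in> edges F" "e \<in> edges H" "T e \<notin> edges F"
  shows "e \<in> atomic_edges H"
proof (rule ccontr)
  assume "e \<notin> atomic_edges H"
  then have Te: "T e \<in> edges H" "T e \<notin> atomic_edges H" "T e \<noteq> e"
    using tau_nonatomic_edge[OF H e(2)] by blast+
  have "e \<in> atomic_edges F"
    using e tau_nonatomic_edge[OF F] by blast
  then have "e \<in> atomic_edges G" "T e \<in> atomic_edges G"
    using tau_atomic_edge[OF G] lower_cover_below[OF F G covF] lower_cover_below[OF H G covH] Te(1)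
    by blast+
  from H G covH show False
  proof (cases rule: lower_cover_cases)
    case (atomic_pair f)
    have "T (T f) = f"
      using tau_edge_tau_edge[OF G] atomic_edges_subset[OF G] atomic_pair(1) by blast
    then have "T f \<in> paired_atomic_edges \<tau> F \<longleftrightarrow> f \<in> paired_atomic_edges \<tau> F"
      using tau_paired_atomic_edge[OF F] by metis
    moreover have "e \<notin> paired_atomic_edges \<tau> F"
      using e(1,3) unfolding paired_atomic_edges_def unpaired_def by blast
    moreover have "e = f \<or> e = T f"
      using atomic_pair(6) \<open>e \<in> atomic_edges G\<close> \<open>e \<notin> atomic_edges H\<close> by blast
    ultimately have "t_le p q \<tau> F H"
      using t_le_atomic_pair_merged_iff[OF F H G covered_s_le[OF covF] atomic_pair] by blast
    with not_le show False ..
  next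
    case (atomic_edge f)
    with \<open>e \<in> atomic_edges G\<close> \<open>T e \<in> atomic_edges G\<close> \<open>e \<notin> atomic_edges H\<close> Te(2,3)
    show False
      by blast
  qed (use \<open>e \<in> atomic_edges G\<close> \<open>e \<notin> atomic_edges H\<close> in blast)+
qed

lemma lower_covers_compatible:
  assumes F: "is_pdCG p \<tau> F" and H: "is_pdCG p \<tau> H" and G: "is_pdCG p \<tau> G"
    and covF: "covered_s p \<tau> F G" and covH: "covered_s p \<tau> H G"
    and "\<not> t_le p q \<tau> F H" "\<not> t_le p q \<tau> H F"
  shows "unpaired T (edges F \<inter> edges H) \<subseteq> atomic_edges F \<inter> atomic_edges H"
proof
  fix e assume "e \<in> unpaired T (edges F \<inter> edges H)"
  then have e: "e \<in> edges F" "e \<in> edges H" and "T e = e \<or> T e \<notin> edges F \<or> T e \<notin> edges H"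
    unfolding unpaired_def by blast+
  then consider "T e = e" | "T e \<notin> edges F" | "T e \<notin> edges H"
    by blast
  then show "e \<in> atomic_edges F \<inter> atomic_edges H"
  proof cases
    case 1
    then have "e \<in> unpaired T (edges F)" "e \<in> unpaired T (edges H)"
      using e unfolding unpaired_def by blast+
    then show ?thesis
      using unpaired_subset_atoms[OF atomic_edges_twin_atoms[OF F]]
        unpaired_subset_atoms[OF atomic_edges_twin_atoms[OF H]] by blast
  next
    case 2
    then have "e \<in> unpaired T (edges F)"
      using e unfolding unpaired_def by blast
    then show ?thesis
      using unpaired_subset_atoms[OF atomic_edges_twin_atoms[OF F]]
        atomic_if_twin_missing[OF F H G covF covH assms(6) e 2] by blast
  next
    case 3
    then have "e \<in> unpaired T (edges H)"
      using e unfolding unpaired_def by blast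
    then show ?thesis
      using unpaired_subset_atoms[OF atomic_edges_twin_atoms[OF H]]
        atomic_if_twin_missing[OF H F G covH covF assms(7) e(2,1) 3] by blast
  qed
qed

section \<open>Rank\<close>

text \<open>Twice the height in the model inclusion order: every covering step adds \<open>2\<close>.\<close>

definition model_rank :: "cgraph \<Rightarrow> nat" where
  "model_rank K = card (atomic_vertices K) + card (atomic_edges K) + card (edges K)"

lemma finite_F_V: "finite (F_V p)"
  by (rule finite_subset[of _ "{1..p} \<times> {1..p}"]) (auto simp: F_V_def)

lemma finite_edges: "is_pdCG p \<tau> K \<Longrightarrow> finite (edges K)"
  using finite_F_V edges_subset_F_V finite_subset by blast

lemma even_model_rank:
  assumes K: "is_pdCG p \<tau> K"
  shows "even (model_rank K)"
proof -
  have "twin_atoms \<tau> {1..p} {}"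
    unfolding twin_atoms_def using tau_mem tau_neq tau_tau by blast
  then have "even p"
    using even_card_Diff_twin_atoms[of "{1..p}" \<tau> "{}"] by simp
  moreover have "even (card ({1..p} - atomic_vertices K))"
    by (rule even_card_Diff_twin_atoms[OF _ atomic_vertices_twin_atoms[OF K]]) simp
  moreover have "even (card (edges K - atomic_edges K))"
    by (rule even_card_Diff_twin_atoms[OF finite_edges[OF K] atomic_edges_twin_atoms[OF K]])
  moreover have "card (atomic_vertices K) + card ({1..p} - atomic_vertices K) = p"
    using card_Int_Diff[of "{1..p}" "atomic_vertices K"] twin_atoms_subset[OF atomic_vertices_twin_atoms[OF K]]
    by (simp add: Int_absorb1)
  moreover have "card (atomic_edges K) + card (edges K - atomic_edges K) = card (edges K)"
    using card_Int_Diff[OF finite_edges[OF K], of "atomic_edges K"] atomic_edges_subset[OF K]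
    by (simp add: Int_absorb1)
  ultimately show ?thesis
    unfolding model_rank_def by presburger
qed

lemma model_rank_less:
  assumes H: "is_pdCG p \<tau> H" and G: "is_pdCG p \<tau> G" and "s_le H G" "H \<noteq> G"
  shows "model_rank H < model_rank G"
proof -
  have sub: "atomic_vertices H \<subseteq> atomic_vertices G" "atomic_edges H \<subseteq> atomic_edges G"
      "edges H \<subseteq> edges G"
    using assms(3) unfolding s_le_iff[OF H G] by blast+
  have fin: "finite (atomic_vertices G)" "finite (atomic_edges G)" "finite (edges G)"
    using finite_edges[OF G] atomic_edges_subset[OF G]
      twin_atoms_subset[OF atomic_vertices_twin_atoms[OF G]] by (auto intro: finite_subset)
  have "\<not> (atomic_vertices H = atomic_vertices G \<and> atomic_edges H = atomic_edges G \<and> edges H = edges G)"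
    using pdCG_eqI[OF H G] assms(4) by blast
  then consider "atomic_vertices H \<subset> atomic_vertices G" | "atomic_edges H \<subset> atomic_edges G"
    | "edges H \<subset> edges G"
    using sub by blast
  then have "card (atomic_vertices H) < card (atomic_vertices G) \<or>
      card (atomic_edges H) < card (atomic_edges G) \<or> card (edges H) < card (edges G)"
    by cases (simp_all add: psubset_card_mono fin)
  moreover have "card (atomic_vertices H) \<le> card (atomic_vertices G)"
      "card (atomic_edges H) \<le> card (atomic_edges G)" "card (edges H) \<le> card (edges G)"
    using card_mono fin sub by blast+
  ultimately show ?thesis
    unfolding model_rank_def by linarith
qed

lemma model_rank_lower_cover:
  assumes F: "is_pdCG p \<tau> F" and G: "is_pdCG p \<tau> G" and cov: "covered_s p \<tau> F G"
  shows "model_rank G = model_rank F + 2"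
proof -
  have fin: "finite (atomic_vertices G)" "finite (atomic_edges G)" "finite (edges G)"
    using finite_edges[OF G] atomic_edges_subset[OF G]
      twin_atoms_subset[OF atomic_vertices_twin_atoms[OF G]] by (auto intro: finite_subset)
  from F G cov show ?thesis
  proof (cases rule: lower_cover_cases)
    case (vertex_pair i)
    moreover have "\<tau> i \<in> atomic_vertices G" "\<tau> i \<noteq> i"
      using tau_atomic_vertex[OF G] tau_neq twin_atoms_subset[OF atomic_vertices_twin_atoms[OF G]]
        vertex_pair(1) by blast+
    ultimately show ?thesis
      using card_Diff_doubleton[OF fin(1) vertex_pair(1)] unfolding model_rank_def by simp
  next
    case (edge_pair e)
    have "T e \<in> edges G" "e \<noteq> T e"
      using tau_nonatomic_edge[OF G, of e] edge_pair(1) by auto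
    then have "card (edges G - {e, T e}) + 2 = card (edges G)"
      using card_Diff_doubleton[OF fin(3)] edge_pair(1) by blast
    with edge_pair show ?thesis
      unfolding model_rank_def by simp
  next
    case (atomic_edge e)
    have "Suc (card (edges G - {e})) = card (edges G)"
      using card_Suc_Diff1[OF fin(3)] atomic_edge(1) atomic_edges_subset[OF G] by blast
    moreover have "Suc (card (atomic_edges G - {e})) = card (atomic_edges G)"
      using card_Suc_Diff1[OF fin(2) atomic_edge(1)] .
    ultimately show ?thesis
      using atomic_edge unfolding model_rank_def by simp
  next
    case (atomic_pair e)
    then have "card (atomic_edges G - {e, T e}) + 2 = card (atomic_edges G)"
      by (intro card_Diff_doubleton[OF fin(2)]) auto
    with atomic_pair show ?thesis
      unfolding model_rank_def by simp
  qed
qed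

lemma covered_s_if_model_rank:
  assumes F: "is_pdCG p \<tau> F" and G: "is_pdCG p \<tau> G" and "s_le F G"
    and rank: "model_rank G = model_rank F + 2"
  shows "covered_s p \<tau> F G"
proof -
  have "\<not> (s_less F K \<and> s_less K G)" if K: "is_pdCG p \<tau> K" for K
  proof
    assume "s_less F K \<and> s_less K G"
    then have "model_rank F < model_rank K" "model_rank K < model_rank G"
      using model_rank_less[OF F K] model_rank_less[OF K G] unfolding s_less_def by blast+
    moreover from this rank have "model_rank K = model_rank F + 2"
      by (intro even_less_le_add_2[OF even_model_rank[OF F] even_model_rank[OF K]]) auto
    ultimately show False
      using rank by simp
  qed
  moreover have "F \<noteq> G"
    using rank by auto
  ultimately show ?thesis
    using \<open>s_le F G\<close> unfolding covered_s_def s_less_def by blast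
qed

lemma model_rank_twin_meet:
  assumes F: "is_pdCG p \<tau> F" and H: "is_pdCG p \<tau> H" and G: "is_pdCG p \<tau> G"
    and "s_le F G" "s_le H G"
  shows "model_rank F + model_rank H \<le> model_rank (twin_meet F H) + model_rank G"
proof -
  note M = is_pdCG_twin_meet[OF F H]
  have fin: "finite (atomic_vertices K)" "finite (atomic_edges K)" "finite (edges K)"
    if "is_pdCG p \<tau> K" for K
    using finite_edges[OF that] atomic_edges_subset[OF that]
      twin_atoms_subset[OF atomic_vertices_twin_atoms[OF that]] by (auto intro: finite_subset)
  have sub: "atomic_vertices F \<subseteq> atomic_vertices G" "atomic_edges F \<subseteq> atomic_edges G"
      "edges F \<subseteq> edges G" "atomic_vertices H \<subseteq> atomic_vertices G" "atomic_edges H \<subseteq> atomic_edges G"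
      "edges H \<subseteq> edges G"
    using assms(4,5) unfolding s_le_iff[OF F G] s_le_iff[OF H G] by blast+
  have "card (atomic_vertices F) + card (atomic_vertices H) \<le>
      card (atomic_vertices (twin_meet F H)) + card (atomic_vertices G)"
    by (rule card_add_card_le[OF fin(1)[OF G] fin(1)[OF M] sub(1,4)])
      (simp add: atomic_vertices_twin_meet[OF F H])
  moreover have "card (atomic_edges F) + card (atomic_edges H) \<le>
      card (atomic_edges (twin_meet F H)) + card (atomic_edges G)"
    by (rule card_add_card_le[OF fin(2)[OF G] fin(2)[OF M] sub(2,5)])
      (simp add: atomic_edges_twin_meet[OF F H])
  moreover have "card (edges F) + card (edges H) \<le> card (edges (twin_meet F H)) + card (edges G)"
    by (rule card_add_card_le[OF fin(3)[OF G] fin(3)[OF M] sub(3,6)])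
      (simp add: edges_twin_meet[OF F H])
  ultimately show ?thesis
    unfolding model_rank_def by linarith
qed

lemma twin_meet_covered:
  assumes F: "is_pdCG p \<tau> F" and H: "is_pdCG p \<tau> H" and G: "is_pdCG p \<tau> G"
    and covF: "covered_s p \<tau> F G" and HG: "s_le H G"
    and compatible: "unpaired T (edges F \<inter> edges H) \<subseteq> atomic_edges F \<inter> atomic_edges H"
    and not_le: "\<not> t_le p q \<tau> H F"
  shows "covered_s p \<tau> (twin_meet F H) H"
proof -
  note M = is_pdCG_twin_meet[OF F H]
  have "s_le (twin_meet F H) H"
    using twin_meet_s_le_factors[OF F H compatible] by blast
  moreover have "twin_meet F H \<noteq> H"
    using twin_meet_t_le(1)[OF F H] not_le by metis
  ultimately have "model_rank (twin_meet F H) < model_rank H"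
    using model_rank_less[OF M H] by blast
  moreover have "model_rank H \<le> model_rank (twin_meet F H) + 2"
    using model_rank_twin_meet[OF F H G covered_s_le[OF covF] HG] model_rank_lower_cover[OF F G covF]
    by linarith
  ultimately have "model_rank H = model_rank (twin_meet F H) + 2"
    by (rule even_less_le_add_2[OF even_model_rank[OF M] even_model_rank[OF H]])
  with \<open>s_le (twin_meet F H) H\<close> show ?thesis
    by (rule covered_s_if_model_rank[OF M H])
qed

lemma twin_meet_not_t_le:
  assumes F: "is_pdCG p \<tau> F" and F': "is_pdCG p \<tau> F'" and H: "is_pdCG p \<tau> H" and G: "is_pdCG p \<tau> G"
    and covF': "covered_s p \<tau> F' G" and "s_le F G" "s_le H G"
    and "\<not> t_le p q \<tau> F F'" "\<not> t_le p q \<tau> H F'"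
  shows "\<not> t_le p q \<tau> (twin_meet F H) (twin_meet F' H)"
proof
  assume "t_le p q \<tau> (twin_meet F H) (twin_meet F' H)"
  then have "t_le p q \<tau> (twin_meet F H) F'"
    using t_le_trans twin_meet_t_le(1)[OF F' H] by blast
  then show False
    using t_le_lower_cover_twin_meet[OF F H F' G covF'] assms(6-9) by blast
qed

end

theorem corollary11:
  fixes p q :: nat and \<tau> :: "nat \<Rightarrow> nat" and G H :: cgraph and A :: "cgraph set"
  assumes tau: "twin_pairing p \<tau>"
    and LR: "\<tau> ` {1..q} = {q+1..p}"
    and G: "is_pdCG p \<tau> G"
    and A_pd: "\<forall>F\<in>A. is_pdCG p \<tau> F"
    and A_inc: "\<forall>F\<in>A. \<forall>F'\<in>A. F \<noteq> F' \<longrightarrow> \<not> t_le p q \<tau> F F'"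
    and A_cov: "\<forall>F\<in>A. covered_s p \<tau> F G"
    and H: "H \<in> A"
  shows "(\<lambda>F. meet_s p \<tau> F H) ` (A - {H}) = (\<lambda>F. meet_t p q \<tau> F H) ` (A - {H}) \<and>
         (let B = (\<lambda>F. meet_t p q \<tau> F H) ` (A - {H}) in
            (\<forall>F\<in>B. \<forall>F'\<in>B. F \<noteq> F' \<longrightarrow> \<not> t_le p q \<tau> F F') \<and>
            (\<forall>F\<in>B. covered_s p \<tau> F H))"
proof -
  interpret paired_vertices p q \<tau>
    using tau LR by unfold_locales
  have H_pd: "is_pdCG p \<tau> H" and H_cov: "covered_s p \<tau> H G"
    using A_pd A_cov H by blast+
  have member: "is_pdCG p \<tau> F" "covered_s p \<tau> F G" "\<not> t_le p q \<tau> F H" "\<not> t_le p q \<tau> H F"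
    if "F \<in> A - {H}" for F
    using that A_pd A_cov A_inc[rule_format, of F H] A_inc[rule_format, of H F] H by auto
  have compatible: "unpaired (tau_edge \<tau>) (edges F \<inter> edges H) \<subseteq> atomic_edges F \<inter> atomic_edges H"
    if "F \<in> A - {H}" for F
    using lower_covers_compatible[OF member(1)[OF that] H_pd G member(2)[OF that] H_cov member(3,4)[OF that]] .
  have meet_s: "(\<lambda>F. meet_s p \<tau> F H) ` (A - {H}) = (\<lambda>F. twin_meet F H) ` (A - {H})"
    using meet_s_eq[OF member(1) H_pd compatible] by (rule image_cong[OF refl])
  have meet_t: "(\<lambda>F. meet_t p q \<tau> F H) ` (A - {H}) = (\<lambda>F. twin_meet F H) ` (A - {H})"
    using meet_t_eq[OF member(1) H_pd] by (rule image_cong[OF refl])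
  have "\<not> t_le p q \<tau> (twin_meet F H) (twin_meet F' H)"
    if "F \<in> A - {H}" "F' \<in> A - {H}" "twin_meet F H \<noteq> twin_meet F' H" for F F'
    using twin_meet_not_t_le[OF member(1)[OF that(1)] member(1)[OF that(2)] H_pd G member(2)[OF that(2)]
        covered_s_le[OF member(2)[OF that(1)]] covered_s_le[OF H_cov]]
      A_inc[rule_format, of F F'] A_inc[rule_format, of H F'] that H by auto
  moreover have "covered_s p \<tau> (twin_meet F H) H" if "F \<in> A - {H}" for F
    using twin_meet_covered[OF member(1)[OF that] H_pd G member(2)[OF that] covered_s_le[OF H_cov]
        compatible[OF that] member(4)[OF that]] .
  ultimately show ?thesis
    unfolding Let_def meet_s meet_t by auto
qed

end
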